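(* Let $p$ be an odd prime. If $A,B\subseteq\mathbb{F}_p$ satisfy $A+B=P_p$ and $|A|=|B|$, then $$\sqrt{\varphi(p-1)}\le |A|<\sqrt{p}.$$
   Context: $\mathbb{F}_p$ is the finite field with $p$ elements. $P_p$ denotes the set of primitive elements of $\mathbb{F}_p$, i.e. the generators of the cyclic group $\mathbb{F}_p^{\times}$. For $A,B\subseteq\mathbb{F}_p$, $A+B=\{a+b: a\in A,\ b\in B\}$. $\varphi$ is Euler's totient function. *)

theory Defs
  imports "HOL-Number_Theory.Number_Theory"
begin

text \<open>Elements of F_p are represented by their canonical residues in {0..<p}.\<close>

definition primitive_elements :: "nat \<Rightarrow> nat set" where
  "primitive_elements p = {g \<in> {0..<p}. residue_primroot p g}"

definition sumset_mod :: "nat \<Rightarrow> nat set \<Rightarrow> nat set \<Rightarrow> nat set" where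
  "sumset_mod p A B = {(a + b) mod p | a b. a \<in> A \<and> b \<in> B}"

end

theory Submission
  imports Defs
begin

text \<open>The lower bound is the trivial \<open>\<phi>(p - 1) = |A + B| \<le> |A| |B|\<close>. For the upper bound,
  primitive roots are quadratic non-residues, so the quadratic character \<open>\<chi>\<close> is \<open>-1\<close> on
  \<open>A + B\<close>. Put \<open>f(x) = \<Sum>\<^sub>b\<^sub>\<in>\<^sub>B \<chi>(x + b)\<close>. Since \<open>\<Sum>\<^sub>x \<chi>(x + b) \<chi>(x + c) = -1\<close> for \<open>b \<noteq> c\<close>,
  \<open>\<Sum>\<^sub>x f(x)\<^sup>2 = |B| (p - |B|)\<close>, while the points of \<open>A\<close> alone, where \<open>f = -|B|\<close>,
  contribute \<open>|A| |B|\<^sup>2\<close>. Hence \<open>|A| |B| \<le> p - |B| < p\<close>.\<close>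

lemma Legendre_mult:
  assumes "prime p" "2 < p"
  shows "Legendre (a * b) (int p) = Legendre a (int p) * Legendre b (int p)"
proof -
  have "[Legendre (a * b) (int p) = (a * b) ^ ((p - 1) div 2)] (mod int p)"
    by (rule euler_criterion[OF assms])
  moreover have "[Legendre a (int p) * Legendre b (int p)
                    = a ^ ((p - 1) div 2) * b ^ ((p - 1) div 2)] (mod int p)"
    by (intro cong_mult euler_criterion[OF assms])
  ultimately have "[Legendre (a * b) (int p) + 1
                      = Legendre a (int p) * Legendre b (int p) + 1] (mod int p)"
    by (metis cong_add_rcancel cong_sym cong_trans power_mult_distrib)
  \<comment> \<open>both sides lie in \<open>{0, 1, 2}\<close>, a set of canonical residues since \<open>2 < p\<close>\<close>
  moreover have "Legendre c (int p) \<in> {-1, 0, 1}" for c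
    by (simp add: Legendre_def)
  then have "Legendre (a * b) (int p) \<in> {-1, 0, 1}"
    "Legendre a (int p) \<in> {-1, 0, 1}" "Legendre b (int p) \<in> {-1, 0, 1}"
    by blast+
  then have "0 \<le> Legendre (a * b) (int p) + 1" "Legendre (a * b) (int p) + 1 < int p"
    "0 \<le> Legendre a (int p) * Legendre b (int p) + 1"
    "Legendre a (int p) * Legendre b (int p) + 1 < int p"
    using assms(2) by auto
  ultimately show ?thesis
    using cong_less_imp_eq_int by fastforce
qed

lemma Legendre_mod: "Legendre (a mod p) p = Legendre a p"
  by (simp add: Legendre_def QuadRes_def cong_def)

definition chi :: "nat \<Rightarrow> nat \<Rightarrow> int" where
  "chi p x = Legendre (int x) (int p)"

lemma chi_mod: "chi p (x mod p) = chi p x"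
  by (simp add: chi_def of_nat_mod Legendre_mod)

lemma chi_eq_0_iff: "chi p x = 0 \<longleftrightarrow> p dvd x"
  by (auto simp: chi_def Legendre_def cong_0_iff)

lemma chi_square_eq_1: "\<not> p dvd x \<Longrightarrow> chi p x * chi p x = 1"
  by (auto simp: chi_def Legendre_def cong_0_iff)

lemma chi_1:
  assumes "1 < p"
  shows "chi p 1 = 1"
proof -
  have "QuadRes (int p) 1"
    unfolding QuadRes_def by (rule exI[of _ 1]) simp
  with assms show ?thesis
    by (auto simp: chi_def Legendre_def cong_def)
qed

lemma chi_mult:
  assumes "prime p" "2 < p"
  shows "chi p (x * y) = chi p x * chi p y"
  by (simp add: chi_def Legendre_mult[OF assms])

lemma chi_power_odd:
  assumes "prime p" "2 < p" "odd n" "\<not> p dvd x"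
  shows "chi p (x ^ n) = chi p x"
proof -
  obtain m where n: "n = Suc (2 * m)"
    using assms(3) by (metis oddE Suc_eq_plus1)
  have "\<not> p dvd x ^ m"
    using assms(1,4) prime_dvd_power by blast
  moreover have "x ^ n = x ^ m * x ^ m * x"
    by (simp add: n mult_2 power_add)
  ultimately show ?thesis
    by (simp add: chi_mult[OF assms(1,2)] chi_square_eq_1)
qed

text \<open>A primitive root is not a square, since its order \<open>p - 1\<close> does not divide \<open>(p - 1) div 2\<close>.\<close>

lemma chi_residue_primroot:
  assumes "prime p" "2 < p" "residue_primroot p g"
  shows "chi p g = -1"
proof (rule ccontr)
  assume not_neg: "chi p g \<noteq> -1"
  have "coprime p g" and ord: "ord p g = p - 1"
    using assms(3) totient_prime[OF assms(1)] by (auto simp: residue_primroot_def)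
  then have "\<not> p dvd g"
    using assms(1) by (metis coprime_absorb_left not_prime_unit)
  with not_neg have "Legendre (int g) (int p) = 1"
    by (auto simp: chi_def Legendre_def cong_0_iff split: if_splits)
  then have "[g ^ ((p - 1) div 2) = 1] (mod p)"
    using euler_criterion[OF assms(1,2), of "int g"]
    by (metis cong_int_iff cong_sym of_nat_1 of_nat_power)
  then have "p - 1 dvd (p - 1) div 2"
    using ord ord_divides by metis
  then show False
    using assms(2) by (auto dest: dvd_imp_le)
qed

lemma sum_reindex_card_eq:
  assumes "finite T" "inj_on h S" "h ` S \<subseteq> T" "card S = card T"
  shows "(\<Sum>x\<in>S. g (h x)) = (\<Sum>y\<in>T. g y)"
proof -
  have "h ` S = T"
    using assms by (metis card_image card_subset_eq)
  then show ?thesis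
    using assms(2) by (metis sum.reindex_cong)
qed

lemma sum_chi_eq_0:
  assumes "prime p" "2 < p"
  shows "(\<Sum>z<p. chi p z) = 0"
proof -
  obtain g where g: "residue_primroot p g"
    using prime_primitive_root_exists prime_gt_1_nat assms(1) by blast
  define h where "h z = (g * z) mod p" for z
  have "coprime g p"
    using g by (simp add: residue_primroot_def coprime_commute)
  have inj: "inj_on h {..<p}"
  proof (rule inj_onI)
    fix x y assume "x \<in> {..<p}" "y \<in> {..<p}" "h x = h y"
    then have "[g * x = g * y] (mod p)"
      by (simp add: h_def cong_def)
    with \<open>coprime g p\<close> have "[x = y] (mod p)"
      using cong_mult_lcancel_nat by blast
    with \<open>x \<in> {..<p}\<close> \<open>y \<in> {..<p}\<close> show "x = y"
      by (simp add: cong_less_modulus_unique_nat)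
  qed
  have "(\<Sum>z<p. chi p (h z)) = (\<Sum>z<p. chi p z)"
    by (rule sum_reindex_card_eq[OF _ inj]) (auto simp: h_def)
  moreover have "chi p (h z) = - chi p z" for z
    by (simp add: h_def chi_mod chi_mult[OF assms] chi_residue_primroot[OF assms g])
  ultimately show ?thesis
    by (simp add: sum_negf)
qed

lemma dvd_add_iff_eq_mod:
  assumes "x < p" "c < (p::nat)"
  shows "p dvd x + c \<longleftrightarrow> x = (p - c) mod p"
proof -
  have "x + c < 2 * p"
    using assms by linarith
  then have "p dvd x + c \<longleftrightarrow> x + c = 0 \<or> x + c = p"
    by (auto elim!: dvdE simp: less_2_cases_iff)
  then show ?thesis
    using assms by (cases "c = 0") auto
qed

lemma fermat_inverse:
  assumes "prime p" "\<not> p dvd u"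
  shows "[u ^ (p - 2) * u = 1] (mod p)"
proof -
  have "p - 1 = Suc (p - 2)"
    using prime_gt_1_nat[OF assms(1)] by linarith
  then have "u ^ (p - 2) * u = u ^ (p - 1)"
    by (simp only: power_Suc2)
  then show ?thesis
    using fermat_theorem[OF assms] by simp
qed

lemma cross_cong_imp_eq:
  fixes p x y b c :: nat
  assumes "prime p" "x < p" "y < p" "b < p" "c < p" "b \<noteq> c"
    and "[(x + b) * (y + c) = (y + b) * (x + c)] (mod p)"
  shows "x = y"
proof -
  have "int p dvd (int x - int y) * (int c - int b)"
    using assms(7) unfolding cong_int_iff[symmetric] cong_iff_dvd_diff
    by (simp add: algebra_simps)
  then have "[x = y] (mod p) \<or> [c = b] (mod p)"
    using assms(1) by (simp add: prime_dvd_mult_iff flip: cong_iff_dvd_diff cong_int_iff)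
  then show ?thesis
    using assms(2-6) cong_less_modulus_unique_nat by blast
qed

text \<open>The map \<open>x \<mapsto> (x + b) / (x + c)\<close> on \<open>\<bbbF>\<^sub>p \<setminus> {-c}\<close>, with the inverse
  of \<open>x + c\<close> written as its \<open>(p - 2)\<close>-th power.\<close>

lemma fractional_linear_map:
  fixes p b c :: nat
  assumes "prime p" "b < p" "c < p" "b \<noteq> c"
  defines "h \<equiv> \<lambda>x. ((x + b) * (x + c) ^ (p - 2)) mod p"
  shows "inj_on h {x \<in> {..<p}. \<not> p dvd x + c}"
    and "h ` {x \<in> {..<p}. \<not> p dvd x + c} \<subseteq> {..<p} - {1}"
proof -
  have inv: "[(x + c) ^ (p - 2) * (x + c) = 1] (mod p)" if "\<not> p dvd x + c" for x
    using fermat_inverse[OF assms(1) that] .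
  show "inj_on h {x \<in> {..<p}. \<not> p dvd x + c}"
  proof (rule inj_onI)
    fix x y
    assume x: "x \<in> {x \<in> {..<p}. \<not> p dvd x + c}" and y: "y \<in> {x \<in> {..<p}. \<not> p dvd x + c}"
      and "h x = h y"
    then have hxy: "[(x + b) * (x + c) ^ (p - 2) = (y + b) * (y + c) ^ (p - 2)] (mod p)"
      by (simp add: h_def cong_def)
    from x y have "\<not> p dvd x + c" "\<not> p dvd y + c"
      by simp_all
    have "[(x + b) * (y + c) = ((x + c) ^ (p - 2) * (x + c)) * ((x + b) * (y + c))] (mod p)"
      using cong_scalar_right[OF inv[OF \<open>\<not> p dvd x + c\<close>], of "(x + b) * (y + c)"]
      by (simp only: mult_1 cong_sym)
    also have "((x + c) ^ (p - 2) * (x + c)) * ((x + b) * (y + c))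
                 = ((x + b) * (x + c) ^ (p - 2)) * ((x + c) * (y + c))"
      by (simp add: ac_simps)
    also have "[((x + b) * (x + c) ^ (p - 2)) * ((x + c) * (y + c))
                 = ((y + b) * (y + c) ^ (p - 2)) * ((x + c) * (y + c))] (mod p)"
      using hxy by (rule cong_scalar_right)
    also have "((y + b) * (y + c) ^ (p - 2)) * ((x + c) * (y + c))
                 = ((y + c) ^ (p - 2) * (y + c)) * ((y + b) * (x + c))"
      by (simp add: ac_simps)
    also have "[((y + c) ^ (p - 2) * (y + c)) * ((y + b) * (x + c)) = (y + b) * (x + c)] (mod p)"
      using cong_scalar_right[OF inv[OF \<open>\<not> p dvd y + c\<close>], of "(y + b) * (x + c)"]
      by (simp only: mult_1)
    finally show "x = y"
      using cross_cong_imp_eq assms(1-4) x y by blast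
  qed
  have "h x \<noteq> 1" if x: "\<not> p dvd x + c" for x
  proof
    assume "h x = 1"
    then have "[(x + b) * (x + c) ^ (p - 2) = 1] (mod p)"
      using prime_gt_1_nat[OF assms(1)] by (simp add: h_def cong_def)
    then have "[(x + b) * (x + c) ^ (p - 2) * (x + c) = 1 * (x + c)] (mod p)"
      by (rule cong_scalar_right)
    then have "[(x + b) * ((x + c) ^ (p - 2) * (x + c)) = x + c] (mod p)"
      by (simp only: mult_1 mult.assoc)
    moreover have "[(x + b) * ((x + c) ^ (p - 2) * (x + c)) = x + b] (mod p)"
      using cong_scalar_left[OF inv[OF x], of "x + b"] by simp
    ultimately have "[b = c] (mod p)"
      by (metis cong_add_lcancel_nat cong_sym cong_trans)
    with assms(2-4) show False
      using cong_less_modulus_unique_nat by blast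
  qed
  then show "h ` {x \<in> {..<p}. \<not> p dvd x + c} \<subseteq> {..<p} - {1}"
    using prime_gt_0_nat[OF assms(1)] by (auto simp: h_def)
qed

lemma sum_chi_shift_mult:
  assumes "prime p" "2 < p" "b < p" "c < p"
  shows "(\<Sum>x<p. chi p (x + b) * chi p (x + c)) = (if b = c then int p - 1 else -1)"
proof -
  define S where "S = {x \<in> {..<p}. \<not> p dvd x + c}"
  have "S = {..<p} - {(p - c) mod p}"
    using dvd_add_iff_eq_mod[OF _ assms(4)] by (auto simp: S_def)
  then have card_S: "card S = p - 1"
    using assms(2) by simp
  have "(\<Sum>x<p. chi p (x + b) * chi p (x + c)) = (\<Sum>x\<in>S. chi p (x + b) * chi p (x + c))"
    by (rule sum.mono_neutral_right) (auto simp: S_def chi_eq_0_iff)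
  also have "\<dots> = (if b = c then int p - 1 else -1)"
  proof (cases "b = c")
    case True
    then have "(\<Sum>x\<in>S. chi p (x + b) * chi p (x + c)) = (\<Sum>x\<in>S. 1)"
      by (intro sum.cong) (auto simp: S_def chi_square_eq_1)
    with True card_S assms(2) show ?thesis
      by (simp add: of_nat_diff)
  next
    case False
    define h where "h = (\<lambda>x. ((x + b) * (x + c) ^ (p - 2)) mod p)"
    have "odd (p - 2)"
      using prime_odd_nat[OF assms(1,2)] assms(2) by simp
    then have "chi p (h x) = chi p (x + b) * chi p (x + c)" if "x \<in> S" for x
      using that by (simp add: h_def S_def chi_mod chi_mult[OF assms(1,2)] chi_power_odd[OF assms(1,2)])
    then have "(\<Sum>x\<in>S. chi p (x + b) * chi p (x + c)) = (\<Sum>x\<in>S. chi p (h x))"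
      by simp
    also have "\<dots> = (\<Sum>z\<in>{..<p} - {1}. chi p z)"
      using fractional_linear_map[OF assms(1,3,4) False, folded h_def S_def] card_S assms(2)
      by (intro sum_reindex_card_eq) auto
    also have "\<dots> = (\<Sum>z<p. chi p z) - chi p 1"
      using assms(2) by (simp add: sum_diff1)
    finally show ?thesis
      using False assms(2) chi_1[of p] by (simp add: sum_chi_eq_0[OF assms(1,2)])
  qed
  finally show ?thesis .
qed

lemma sum_square_sum_chi_shift:
  assumes "prime p" "2 < p" "B \<subseteq> {..<p}"
  shows "(\<Sum>x<p. (\<Sum>b\<in>B. chi p (x + b))\<^sup>2) = int (card B) * (int p - int (card B))"
proof -
  have "finite B"
    using assms(3) finite_subset by blast
  have "(\<Sum>x<p. (\<Sum>b\<in>B. chi p (x + b))\<^sup>2)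
          = (\<Sum>x<p. \<Sum>b\<in>B. \<Sum>c\<in>B. chi p (x + b) * chi p (x + c))"
    by (simp add: power2_eq_square sum_product)
  also have "\<dots> = (\<Sum>b\<in>B. \<Sum>c\<in>B. \<Sum>x<p. chi p (x + b) * chi p (x + c))"
    by (simp add: sum.swap[of _ "{..<p}"])
  also have "\<dots> = (\<Sum>b\<in>B. \<Sum>c\<in>B. (if b = c then int p else 0) - 1)"
    using assms by (intro sum.cong refl) (auto simp: sum_chi_shift_mult subset_iff)
  also have "\<dots> = (\<Sum>b\<in>B. int p - int (card B))"
    using \<open>finite B\<close> by (simp add: sum_subtractf)
  finally show ?thesis
    by simp
qed

lemma card_mult_less_if_sumset_nonresidues:
  assumes "prime p" "2 < p" "A \<subseteq> {..<p}" "B \<subseteq> {..<p}"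
    and nonres: "\<And>a b. a \<in> A \<Longrightarrow> b \<in> B \<Longrightarrow> chi p (a + b) = -1"
  shows "card A * card B < p"
proof (cases "B = {}")
  case True
  with assms(2) show ?thesis
    by simp
next
  case False
  then have "0 < card B"
    using assms(4) finite_subset by fastforce
  define f where "f x = (\<Sum>b\<in>B. chi p (x + b))" for x
  have "f a = - int (card B)" if "a \<in> A" for a
    using nonres[OF that] by (simp add: f_def)
  then have "int (card A) * int (card B) ^ 2 = (\<Sum>a\<in>A. (f a)\<^sup>2)"
    by simp
  also have "\<dots> \<le> (\<Sum>x<p. (f x)\<^sup>2)"
    using assms(3) by (intro sum_mono2) auto
  also have "\<dots> = int (card B) * (int p - int (card B))"
    unfolding f_def by (rule sum_square_sum_chi_shift[OF assms(1,2,4)])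
  finally have "int (card A) * int (card B) \<le> int p - int (card B)"
    using \<open>0 < card B\<close> by (simp add: power2_eq_square)
  with \<open>0 < card B\<close> have "int (card A) * int (card B) < int p"
    by linarith
  then show ?thesis
    by (metis of_nat_less_iff of_nat_mult)
qed

lemma card_sumset_mod_le:
  assumes "finite A" "finite B"
  shows "card (sumset_mod p A B) \<le> card A * card B"
proof -
  have "sumset_mod p A B = (\<lambda>(a, b). (a + b) mod p) ` (A \<times> B)"
    by (auto simp: sumset_mod_def)
  then show ?thesis
    using assms by (metis card_image_le card_cartesian_product finite_cartesian_product)
qed

lemma card_primitive_elements:
  assumes "prime p"
  shows "card (primitive_elements p) = totient (p - 1)"
proof -
  have "residue_primroot p x \<longleftrightarrow> ord p x = p - 1" if "x < p" for x
    using assms prime_gt_1_nat[OF assms] ord_eq_0[of p x]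
    by (auto simp: residue_primroot_def totient_prime)
  then have "primitive_elements p = {x \<in> {..<p}. ord p x = p - 1}"
    by (auto simp: primitive_elements_def)
  then show ?thesis
    using prime_card_primitive_roots(2)[OF prime_gt_1_nat[OF assms] assms] by simp
qed

theorem theorem1p3:
  fixes p :: nat and A B :: "nat set"
  assumes "prime p" and "odd p"
    and "A \<subseteq> {0..<p}" and "B \<subseteq> {0..<p}"
    and "sumset_mod p A B = primitive_elements p"
    and "card A = card B"
  shows "sqrt (real (totient (p - 1))) \<le> real (card A) \<and> real (card A) < sqrt (real p)"
proof -
  have "2 < p"
    using assms(1,2) prime_ge_2_nat[OF assms(1)] by (metis dvd_refl le_neq_implies_less)
  have A: "A \<subseteq> {..<p}" and B: "B \<subseteq> {..<p}"
    using assms(3,4) by (simp_all add: atLeast0LessThan)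
  have "totient (p - 1) \<le> card A * card A"
    using card_sumset_mod_le[of A B p] finite_subset[OF A] finite_subset[OF B] assms(5,6)
    by (simp add: card_primitive_elements[OF assms(1)])
  moreover have "card A * card A < p"
  proof -
    have "chi p (a + b) = -1" if "a \<in> A" "b \<in> B" for a b
    proof -
      have "(a + b) mod p \<in> sumset_mod p A B"
        using that by (auto simp: sumset_mod_def)
      with assms(5) have "residue_primroot p (a + b)"
        by (simp add: primitive_elements_def)
      then show ?thesis
        by (rule chi_residue_primroot[OF assms(1) \<open>2 < p\<close>])
    qed
    then show ?thesis
      using card_mult_less_if_sumset_nonresidues[OF assms(1) \<open>2 < p\<close> A B] assms(6) by simp
  qed
  ultimately show ?thesis
    by (auto intro!: real_le_lsqrt real_less_rsqrt simp: power2_eq_square simp flip: of_nat_mult)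
qed

end
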